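(* Let $G=(V,v,E)$ be a directed graph with node set $V=\{1,\dots,n\}$, target node $v$ and edge set $E$, and let $Z$ be a set of ordered node pairs with $Z\cap E=\emptyset$. For $\mathbf{y}\in\{0,1\}^{Z}$ with support $Y$, let $\mathcal{FR}(\mathbf{y})\ge0$ be the expected first return time to $v$ of the PageRank random walk on $(V,E\cup Y)$. Let $\mathcal{Y}$ be a constraint set with $\mathcal{Y}\cap\{0,1\}^{Z}\ne\emptyset$, and for disjoint $S,N\subseteq Z$ let $\gamma(S,N)=\min\{\mathcal{FR}(\mathbf{y}): y_e=1\ \forall e\in S,\ y_e=0\ \forall e\in N,\ \mathbf{y}\in\{0,1\}^{Z}\}$. Let $\bar{\mathbf{y}}\in\mathcal{Y}\cap\{0,1\}^{Z}$ with support $\bar Y$, and let $e^1,e^2,\dots,e^{K}$ ($K=|Z\setminus\bar Y|$) be an arbitrary ordering of the edges of $Z\setminus\bar Y$. For $r=1,\dots,K$ define $$\hat\pi_{e^r}(\bar{\mathbf{y}})=\min\Big\{0,\,-\mathcal{FR}(\bar{\mathbf{y}})+\min\{\mathcal{FR}(\mathbf{y}): y_{e^r}=1,\ y_{e^k}=0\ (k=r+1,\dots,K),\ \mathbf{y}\in\{0,1\}^{Z}\}\Big\}=\min\Big\{0,\,-\mathcal{FR}(\bar{\mathbf{y}})+\gamma\big(\{e^r\},\{e^{r+1},\dots,e^{K}\}\big)\Big\}.$$ Then the inequality $$\theta\ \ge\ \mathcal{FR}(\bar{\mathbf{y}})+\sum_{e\in\bar Y}\min\{0,\gamma(\emptyset,\{e\})-\mathcal{FR}(\bar{\mathbf{y}})\}(1-y_e)+\sum_{k=1}^{K}\hat\pi_{e^k}(\bar{\mathbf{y}})\,y_{e^k}$$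 is valid, i.e. it is satisfied by every pair $(\theta,\mathbf{y})$ with $\mathbf{y}\in\mathcal{Y}\cap\{0,1\}^{Z}$, $\theta\in\mathbb{R}_+$ and $\theta\ge\mathcal{FR}(\mathbf{y})$.
   Context: The PageRank random walk is the random walk defined by the PageRank (Google) matrix with fixed damping and teleportation, as in Csáji–Jungers–Blondel; the expected first return time to $v$ is the expected number of steps for the walk started at $v$ to return to $v$ (the reciprocal of $v$'s PageRank). The underlying problem is $\min\{\mathcal{FR}(\mathbf{y}):\mathbf{y}\in\mathcal{Y}\cap\{0,1\}^{Z}\}$ in epigraph form with variable $\theta$. *)

theory Defs
  imports Complex_Main
begin

type_synonym edge = "nat \<times> nat"

definition binvecs :: "edge set \<Rightarrow> (edge \<Rightarrow> real) set" where
  "binvecs Z = {y. (\<forall>e\<in>Z. y e = 0 \<or> y e = 1) \<and> (\<forall>e. e \<notin> Z \<longrightarrow> y e = 0)}"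

definition supp :: "edge set \<Rightarrow> (edge \<Rightarrow> real) \<Rightarrow> edge set" where
  "supp Z y = {e\<in>Z. y e = 1}"

text \<open>PageRank (Google) matrix on nodes {1..n} with edge set A, damping c and
 teleportation distribution z; dangling nodes jump according to z.\<close>
definition pr_matrix :: "nat \<Rightarrow> real \<Rightarrow> (nat \<Rightarrow> real) \<Rightarrow> edge set \<Rightarrow> nat \<Rightarrow> nat \<Rightarrow> real" where
  "pr_matrix n c z A i j =
     (let d = card {k\<in>{1..n}. (i,k) \<in> A} in
      if d = 0 then z j
      else c * (if (i,j) \<in> A then 1 / real d else 0) + (1 - c) * z j)"

text \<open>hit_prob n P v k u: probability that the walk started at u visits v for the
 first time (at a positive time) exactly at step k.\<close>
fun hit_prob :: "nat \<Rightarrow> (nat \<Rightarrow> nat \<Rightarrow> real) \<Rightarrow> nat \<Rightarrow> nat \<Rightarrow> nat \<Rightarrow> real" where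
  "hit_prob n P v 0 u = 0"
| "hit_prob n P v (Suc 0) u = P u v"
| "hit_prob n P v (Suc (Suc m)) u = (\<Sum>w\<in>{1..n} - {v}. P u w * hit_prob n P v (Suc m) w)"

definition expected_return :: "nat \<Rightarrow> (nat \<Rightarrow> nat \<Rightarrow> real) \<Rightarrow> nat \<Rightarrow> real" where
  "expected_return n P v = (\<Sum>k. real k * hit_prob n P v k v)"

definition FR :: "nat \<Rightarrow> real \<Rightarrow> (nat \<Rightarrow> real) \<Rightarrow> edge set \<Rightarrow> nat \<Rightarrow> edge set
                  \<Rightarrow> (edge \<Rightarrow> real) \<Rightarrow> real" where
  "FR n c z E v Z y = expected_return n (pr_matrix n c z (E \<union> supp Z y)) v"

definition gamma :: "nat \<Rightarrow> real \<Rightarrow> (nat \<Rightarrow> real) \<Rightarrow> edge set \<Rightarrow> nat \<Rightarrow> edge set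
                  \<Rightarrow> edge set \<Rightarrow> edge set \<Rightarrow> real" where
  "gamma n c z E v Z S N =
     Min (FR n c z E v Z ` {y \<in> binvecs Z. (\<forall>e\<in>S. y e = 1) \<and> (\<forall>e\<in>N. y e = 0)})"

end

theory Submission
  imports Defs
begin

text \<open>Only the 0/1 structure of y matters, never what FR is. A binary y either coincides with
  ybar, or switches off some edge e of ybar (then gamma({},{e}) \<le> FR(y)), or switches on some
  edge outside ybar; taking the last such edge e^r in the ordering, y satisfies the constraints
  defining gamma({e^r},{e^(r+1),...,e^K}). All terms of the cut are nonpositive, and in the last
  two cases the term of that single edge is at most FR(y) - FR(ybar).\<close>

lemma finite_binvecs:
  assumes "finite Z"
  shows "finite (binvecs Z)"
proof (rule inj_on_finite[where f = "supp Z" and B = "Pow Z"])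
  show "inj_on (supp Z) (binvecs Z)"
  proof (rule inj_onI)
    fix x y assume x: "x \<in> binvecs Z" and y: "y \<in> binvecs Z" and eq: "supp Z x = supp Z y"
    show "x = y"
    proof
      fix e
      show "x e = y e"
      proof (cases "e \<in> Z")
        case True
        then have "x e = 1 \<longleftrightarrow> y e = 1" using eq unfolding supp_def by blast
        then show ?thesis using x y True unfolding binvecs_def by force
      next
        case False
        then show ?thesis using x y unfolding binvecs_def by (simp del: split_paired_All)
      qed
    qed
  qed
qed (auto simp: supp_def assms)

lemma Min_binvecs_le:
  fixes f :: "(edge \<Rightarrow> real) \<Rightarrow> real"
  assumes "finite Z" "y \<in> binvecs Z" "\<forall>e\<in>S. y e = 1" "\<forall>e\<in>N. y e = 0"
  shows "Min (f ` {y \<in> binvecs Z. (\<forall>e\<in>S. y e = 1) \<and> (\<forall>e\<in>N. y e = 0)}) \<le> f y"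
  by (rule Min_le) (use assms finite_binvecs in auto)

lemma sum_le_member_if_nonpos:
  fixes g :: "'a \<Rightarrow> real"
  assumes "finite A" "a \<in> A" "\<And>x. x \<in> A \<Longrightarrow> g x \<le> 0"
  shows "sum g A \<le> g a"
proof -
  have "sum g A = g a + sum g (A - {a})" using assms by (simp add: sum.remove)
  moreover have "sum g (A - {a}) \<le> 0" using assms by (intro sum_nonpos) auto
  ultimately show ?thesis by simp
qed

lemma obtain_last_index:
  assumes "r < length xs" "P (xs ! r)"
  obtains k where "k < length xs" "P (xs ! k)" "\<forall>x\<in>set (drop (Suc k) xs). \<not> P x"
  using assms
proof (induction xs arbitrary: r thesis)
  case Nil
  then show ?case by simp
next
  case (Cons x xs)
  show ?case
  proof (cases "\<exists>x'\<in>set xs. P x'")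
    case True
    then obtain r' where "r' < length xs" "P (xs ! r')" by (metis in_set_conv_nth)
    then obtain k where "k < length xs" "P (xs ! k)" "\<forall>x\<in>set (drop (Suc k) xs). \<not> P x"
      using Cons.IH by blast
    then show ?thesis using Cons.prems(1)[of "Suc k"] by simp
  next
    case False
    then have "P x" using Cons.prems(2,3) by (cases r) auto
    then show ?thesis using Cons.prems(1)[of 0] False by simp
  qed
qed

lemma binvecs_cases:
  assumes y: "y \<in> binvecs Z" and ybar: "ybar \<in> binvecs Z"
    and es: "set es = Z - supp Z ybar"
  obtains "y = ybar"
    | e where "e \<in> supp Z ybar" "y e = 0"
    | r where "r < length es" "y (es ! r) = 1" "\<forall>e\<in>set (drop (Suc r) es). y e = 0"
proof -
  have y01: "y e = 0 \<or> y e = 1" if "e \<in> Z" for e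
    using y that unfolding binvecs_def by auto
  have es_in_Z: "es ! r \<in> Z" if "r < length es" for r
    using es that nth_mem by fastforce
  consider (on_supp_off) e where "e \<in> supp Z ybar" "y e = 0"
    | (off_supp_on) r where "r < length es" "y (es ! r) = 1"
    | (equal) "\<forall>e\<in>supp Z ybar. y e = 1" "\<forall>e\<in>set es. y e = 0"
    using y01 es_in_Z es unfolding supp_def
    by (metis (mono_tags, lifting) in_set_conv_nth mem_Collect_eq)
  then show ?thesis
  proof cases
    case on_supp_off
    then show ?thesis using that(2) by blast
  next
    case off_supp_on
    then obtain k where "k < length es" "y (es ! k) = 1" "\<forall>e\<in>set (drop (Suc k) es). y e \<noteq> 1"
      by (rule obtain_last_index)
    moreover have "set (drop (Suc k) es) \<subseteq> Z" using es set_drop_subset by fastforce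
    ultimately show ?thesis using that(3) y01 by blast
  next
    case equal
    have "y e = ybar e" for e
    proof (cases "e \<in> Z")
      case True
      then have "ybar e = 0 \<or> ybar e = 1" using ybar unfolding binvecs_def by auto
      then show ?thesis using True equal es unfolding supp_def by (auto simp del: split_paired_All)
    next
      case False
      then show ?thesis using y ybar unfolding binvecs_def by (simp del: split_paired_All)
    qed
    then show ?thesis using that(1) by blast
  qed
qed

lemma cut_le_binary_value:
  fixes f :: "(edge \<Rightarrow> real) \<Rightarrow> real" and Z :: "edge set"
  defines "gam S N \<equiv> Min (f ` {y \<in> binvecs Z. (\<forall>e\<in>S. y e = 1) \<and> (\<forall>e\<in>N. y e = 0)})"
  assumes Z: "finite Z" and y: "y \<in> binvecs Z" and ybar: "ybar \<in> binvecs Z"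
    and es: "set es = Z - supp Z ybar"
  shows "f ybar
     + (\<Sum>e\<in>supp Z ybar. min 0 (gam {} {e} - f ybar) * (1 - y e))
     + (\<Sum>r<length es. min 0 (- f ybar + gam {es ! r} (set (drop (Suc r) es))) * y (es ! r))
     \<le> f y"
proof -
  define drop_term where "drop_term e = min 0 (gam {} {e} - f ybar) * (1 - y e)" for e
  define add_term where
    "add_term r = min 0 (- f ybar + gam {es ! r} (set (drop (Suc r) es))) * y (es ! r)" for r
  have y01: "y e = 0 \<or> y e = 1" if "e \<in> Z" for e
    using y that unfolding binvecs_def by auto
  have drop_nonpos: "drop_term e \<le> 0" if "e \<in> supp Z ybar" for e
    using y01[of e] that unfolding drop_term_def supp_def by auto
  have add_nonpos: "add_term r \<le> 0" if "r < length es" for r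
    using y01[of "es ! r"] that es nth_mem unfolding add_term_def by fastforce
  have fin_supp: "finite (supp Z ybar)" using Z unfolding supp_def by simp
  have drop_sum: "sum drop_term (supp Z ybar) \<le> 0" using drop_nonpos by (intro sum_nonpos)
  have add_sum: "sum add_term {..<length es} \<le> 0" using add_nonpos by (intro sum_nonpos) simp
  have "f ybar + sum drop_term (supp Z ybar) + sum add_term {..<length es} \<le> f y"
    using y ybar es
  proof (cases rule: binvecs_cases)
    case 1
    then show ?thesis using drop_sum add_sum by simp
  next
    case (2 e)
    have "sum drop_term (supp Z ybar) \<le> drop_term e"
      using 2 drop_nonpos fin_supp by (intro sum_le_member_if_nonpos)
    also have "\<dots> \<le> gam {} {e} - f ybar" using 2 unfolding drop_term_def by simp
    also have "gam {} {e} \<le> f y" unfolding gam_def using 2 by (intro Min_binvecs_le[OF Z y]) auto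
    finally show ?thesis using add_sum by simp
  next
    case (3 r)
    have "sum add_term {..<length es} \<le> add_term r"
      using 3 add_nonpos by (intro sum_le_member_if_nonpos) auto
    also have "\<dots> \<le> - f ybar + gam {es ! r} (set (drop (Suc r) es))"
      using 3 unfolding add_term_def by simp
    also have "gam {es ! r} (set (drop (Suc r) es)) \<le> f y"
      unfolding gam_def using 3 by (intro Min_binvecs_le[OF Z y]) auto
    finally show ?thesis using drop_sum by simp
  qed
  then show ?thesis unfolding drop_term_def add_term_def .
qed

theorem theorem2:
  fixes n v :: nat and E Z :: "edge set" and c :: real and z :: "nat \<Rightarrow> real"
    and Ycon :: "(edge \<Rightarrow> real) set" and ybar y :: "edge \<Rightarrow> real"
    and es :: "edge list" and \<theta> :: real
  assumes "v \<in> {1..n}"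
    and "E \<subseteq> {1..n} \<times> {1..n}" and "Z \<subseteq> {1..n} \<times> {1..n}" and "Z \<inter> E = {}"
    and "0 < c" and "c < 1" and "\<forall>j\<in>{1..n}. z j > 0" and "(\<Sum>j\<in>{1..n}. z j) = 1"
    and "Ycon \<inter> binvecs Z \<noteq> {}"
    and "ybar \<in> Ycon \<inter> binvecs Z"
    and "distinct es" and "set es = Z - supp Z ybar"
    and "y \<in> Ycon \<inter> binvecs Z" and "\<theta> \<ge> 0" and "\<theta> \<ge> FR n c z E v Z y"
  shows "\<theta> \<ge> FR n c z E v Z ybar
     + (\<Sum>e\<in>supp Z ybar. min 0 (gamma n c z E v Z {} {e} - FR n c z E v Z ybar) * (1 - y e))
     + (\<Sum>r<length es.
          min 0 (- FR n c z E v Z ybar + gamma n c z E v Z {es ! r} (set (drop (Suc r) es)))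
          * y (es ! r))"
proof -
  have "finite Z" using assms(3) finite_subset by blast
  then show ?thesis
    unfolding gamma_def using assms(10,12,13)
    by (intro order_trans[OF cut_le_binary_value[where f = "FR n c z E v Z"] assms(15)]) auto
qed

end
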